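(* Let $E$ and $F$ be Banach lattices such that $E$ or $F$ is order continuous. Then every $L$-weakly compact lattice homomorphism $T\colon E\to F$ is $uaw$-Dunford-Pettis.
   Context: A net $(x_\alpha)$ in a Banach lattice $E$ is $uaw$-convergent to $x$ if $|x_\alpha-x|\wedge u\to 0$ weakly for every $u\in E_+$. A bounded operator $T\colon E\to F$ is $uaw$-Dunford-Pettis if every norm bounded $uaw$-null sequence $(x_n)$ in $E$ satisfies $\|Tx_n\|\to 0$. $T$ is $L$-weakly compact if every disjoint sequence contained in the solid hull of $T(B_E)$ is norm null. *)

theory Defs
  imports "HOL-Analysis.Analysis"
begin

class banach_lattice = banach + ordered_real_vector + lattice +
  assumes lattice_norm: "sup x (- x) \<le> sup y (- y) \<Longrightarrow> norm x \<le> norm y"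

definition labs :: "'a::banach_lattice \<Rightarrow> 'a" where
  "labs x = sup x (- x)"

text \<open>Order continuity: every net decreasing to 0 is norm null. A decreasing net
  is represented by its (downward directed) set of values D with infimum 0.\<close>
definition order_continuous :: "'a::banach_lattice itself \<Rightarrow> bool" where
  "order_continuous _ \<longleftrightarrow>
    (\<forall>D :: 'a set. D \<noteq> {}
       \<and> (\<forall>x\<in>D. \<forall>y\<in>D. \<exists>z\<in>D. z \<le> x \<and> z \<le> y)
       \<and> (\<forall>x\<in>D. 0 \<le> x)
       \<and> (\<forall>w. (\<forall>x\<in>D. w \<le> x) \<longrightarrow> w \<le> 0)
       \<longrightarrow> (\<forall>e>0. \<exists>x\<in>D. norm x < e))"

definition weakly_null :: "(nat \<Rightarrow> 'a::real_normed_vector) \<Rightarrow> bool" where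
  "weakly_null x \<longleftrightarrow>
    (\<forall>f :: 'a \<Rightarrow> real. bounded_linear f \<longrightarrow> (\<lambda>n. f (x n)) \<longlonglongrightarrow> 0)"

definition uaw_null :: "(nat \<Rightarrow> 'a::banach_lattice) \<Rightarrow> bool" where
  "uaw_null x \<longleftrightarrow> (\<forall>u. 0 \<le> u \<longrightarrow> weakly_null (\<lambda>n. inf (labs (x n)) u))"

definition uaw_DP :: "('a::banach_lattice \<Rightarrow> 'b::banach_lattice) \<Rightarrow> bool" where
  "uaw_DP T \<longleftrightarrow> bounded_linear T \<and>
    (\<forall>x :: nat \<Rightarrow> 'a. bounded (range x) \<and> uaw_null x
        \<longrightarrow> (\<lambda>n. norm (T (x n))) \<longlonglongrightarrow> 0)"

definition solid_hull :: "'a::banach_lattice set \<Rightarrow> 'a set" where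
  "solid_hull A = {y. \<exists>a\<in>A. labs y \<le> labs a}"

definition disjoint_seq :: "(nat \<Rightarrow> 'a::banach_lattice) \<Rightarrow> bool" where
  "disjoint_seq x \<longleftrightarrow> (\<forall>m n. m \<noteq> n \<longrightarrow> inf (labs (x m)) (labs (x n)) = 0)"

definition L_weakly_compact :: "('a::banach_lattice \<Rightarrow> 'b::banach_lattice) \<Rightarrow> bool" where
  "L_weakly_compact T \<longleftrightarrow> bounded_linear T \<and>
    (\<forall>y :: nat \<Rightarrow> 'b. disjoint_seq y \<and> range y \<subseteq> solid_hull (T ` cball 0 1)
        \<longrightarrow> (\<lambda>n. norm (y n)) \<longlonglongrightarrow> 0)"

definition lattice_hom :: "('a::banach_lattice \<Rightarrow> 'b::banach_lattice) \<Rightarrow> bool" where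
  "lattice_hom T \<longleftrightarrow> linear T \<and> (\<forall>x y. T (sup x y) = sup (T x) (T y))"

end

(*
  Since T commutes with the modulus, it suffices to show norm (T (z n)) --> 0 for
  positive bounded sequences z such that every truncation inf (z n) w, w >= 0, is
  weakly null. Such truncations are order bounded, and in an order continuous
  Banach lattice a weakly null order bounded positive sequence is norm null: otherwise
  positive norming functionals (Hahn-Banach) and a gliding hump over the tail
  suprema produce a decreasing sequence that is not Cauchy. Hence
  norm (T (inf (z n) w)) --> 0, whether E or F is order continuous.
  If norm (T (z n)) did not tend to 0, pick z (r k) with norm (T (z (r k))) >= delta
  whose truncation at 4^k times the sum of the earlier picks has small image. The
  positive parts of T (z (r k)) - 4^k T (sum of earlier picks) - 2^-k Y, where Y bounds
  all 2^-k T (z (r k)), are pairwise disjoint, dominated by T (z (r k)), and keep norm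
  about delta/2; this contradicts L-weak compactness.
*)
theory Submission
  imports Defs "HOL-Library.Lattice_Algebras"
begin

context banach_lattice begin
subclass lattice_ab_group_add ..
end

section \<open>Arithmetic in Banach lattices\<close>

lemma labs_nonneg: "0 \<le> labs (x::'a::banach_lattice)"
proof -
  have "x + (-x) \<le> sup x (-x) + sup x (-x)"
    by (intro add_mono) auto
  then show ?thesis unfolding labs_def by simp
qed

lemma labs_of_nonneg: assumes "0 \<le> (x::'a::banach_lattice)" shows "labs x = x"
proof -
  have "-x \<le> x" using assms order_trans[of "-x" 0 x] by simp
  then show ?thesis unfolding labs_def by (rule sup_absorb1)
qed

lemma norm_labs: "norm (labs (x::'a::banach_lattice)) = norm x"
  by (intro antisym lattice_norm) (simp_all only: labs_def[symmetric] labs_of_nonneg labs_nonneg order_refl)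

lemma norm_mono_labs: "labs (x::'a::banach_lattice) \<le> labs y \<Longrightarrow> norm x \<le> norm y"
  by (simp add: labs_def lattice_norm)

lemma norm_mono_nonneg: "0 \<le> (x::'a::banach_lattice) \<Longrightarrow> x \<le> y \<Longrightarrow> norm x \<le> norm y"
  by (rule norm_mono_labs) (simp add: labs_of_nonneg)

lemma norm_le_of_bounds: "(x::'a::banach_lattice) \<le> m \<Longrightarrow> -x \<le> m \<Longrightarrow> norm x \<le> norm m"
proof -
  assume bounds: "x \<le> m" "-x \<le> m"
  have "0 \<le> m" using add_mono[OF bounds] by simp
  moreover have "labs x \<le> m" using bounds unfolding labs_def by simp
  ultimately show ?thesis by (intro norm_mono_labs) (simp add: labs_of_nonneg)
qed

lemma pprt_le_labs: "pprt (x::'a::banach_lattice) \<le> labs x"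
  unfolding pprt_def using labs_nonneg[of x] by (simp add: labs_def)

lemma norm_pprt_le: "norm (pprt (x::'a::banach_lattice)) \<le> norm x"
  by (metis norm_labs norm_mono_nonneg pprt_le_labs zero_le_pprt)

lemma pprt_add_le: "pprt ((x::'a::banach_lattice) + y) \<le> pprt x + pprt y"
  unfolding pprt_def by (simp add: add_mono)

lemma norm_pprt_diff: "norm (pprt (x::'a::banach_lattice) - pprt y) \<le> norm (x - y)"
proof -
  have diff_le: "pprt a - pprt b \<le> labs (a - b)" for a b :: 'a
  proof -
    have "pprt a - pprt b \<le> pprt (a - b)" using pprt_add_le[of "a - b" b] by (simp add: diff_le_eq)
    then show ?thesis using pprt_le_labs by (rule order_trans)
  qed
  have "labs (y - x) = labs (x - y)" unfolding labs_def by (simp add: sup_commute)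
  then have "norm (pprt x - pprt y) \<le> norm (labs (x - y))"
    using diff_le[of x y] diff_le[of y x] by (intro norm_le_of_bounds) simp_all
  then show ?thesis by (simp add: norm_labs)
qed

lemma sup_eq_pprt_diff_add: "sup (x::'a::banach_lattice) y = pprt (x - y) + y"
  unfolding pprt_def by (simp add: add_sup_distrib_right)

lemma inf_add_pprt_diff: "inf (x::'a::banach_lattice) y + pprt (x - y) = x"
  using add_eq_inf_sup[of x y] sup_eq_pprt_diff_add[of x y] by (simp add: algebra_simps)

lemma norm_pprt_diff_ge:
  assumes "0 \<le> (b::'a::banach_lattice)"
  shows "norm (pprt a) - norm b \<le> norm (pprt (a - b))"
proof -
  have "pprt a \<le> sup a b" unfolding pprt_def by (rule sup_mono[OF order_refl assms])
  then have "norm (pprt a) \<le> norm (pprt (a - b) + b)"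
    by (intro norm_mono_nonneg) (simp_all add: sup_eq_pprt_diff_add)
  then show ?thesis using norm_triangle_ineq[of "pprt (a - b)" b] by linarith
qed

lemma scaleR_sup: "0 \<le> t \<Longrightarrow> t *\<^sub>R sup (x::'a::banach_lattice) y = sup (t *\<^sub>R x) (t *\<^sub>R y)"
proof (cases "t = 0")
  case False
  assume "0 \<le> t"
  then have t: "0 < t" using False by simp
  show ?thesis
  proof (rule antisym)
    have "x \<le> inverse t *\<^sub>R sup (t *\<^sub>R x) (t *\<^sub>R y)" "y \<le> inverse t *\<^sub>R sup (t *\<^sub>R x) (t *\<^sub>R y)"
      using scaleR_left_mono[OF sup.cobounded1[of "t *\<^sub>R x" "t *\<^sub>R y"], of "inverse t"]
        scaleR_left_mono[OF sup.cobounded2[of "t *\<^sub>R y" "t *\<^sub>R x"], of "inverse t"] t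
      by simp_all
    then have "sup x y \<le> inverse t *\<^sub>R sup (t *\<^sub>R x) (t *\<^sub>R y)" by simp
    from scaleR_left_mono[OF this, of t] t
    show "t *\<^sub>R sup x y \<le> sup (t *\<^sub>R x) (t *\<^sub>R y)" by simp
    show "sup (t *\<^sub>R x) (t *\<^sub>R y) \<le> t *\<^sub>R sup x y"
      using t by (simp add: scaleR_left_mono)
  qed
qed simp

lemma scaleR_inf: "0 \<le> t \<Longrightarrow> t *\<^sub>R inf (x::'a::banach_lattice) y = inf (t *\<^sub>R x) (t *\<^sub>R y)"
  by (simp only: inf_eq_neg_sup[of x y] inf_eq_neg_sup[of "t *\<^sub>R x"] scaleR_minus_right scaleR_sup)

lemma scaleR_pprt: "0 \<le> t \<Longrightarrow> t *\<^sub>R pprt (x::'a::banach_lattice) = pprt (t *\<^sub>R x)"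
  unfolding pprt_def by (simp add: scaleR_sup)

lemma scaleR_labs: "0 \<le> t \<Longrightarrow> t *\<^sub>R labs (x::'a::banach_lattice) = labs (t *\<^sub>R x)"
  unfolding labs_def by (simp add: scaleR_sup)

lemma inf_pprt_pprt_uminus: "inf (pprt (u::'a::banach_lattice)) (pprt (- u)) = 0"
proof -
  have "pprt u + (- u) = sup (u + (- u)) (0 + (- u))"
    unfolding pprt_def by (rule add_sup_distrib_right)
  then have neg: "pprt (- u) = pprt u + (- u)" by (simp add: pprt_def sup_commute)
  have "inf (pprt u) (pprt u + (- u)) = inf (pprt u + 0) (pprt u + (- u))" by simp
  also have "\<dots> = pprt u + inf 0 (- u)" by (rule add_inf_distrib_left[symmetric])
  also have "inf 0 (- u) = - sup (- 0) (- (- u))" by (rule inf_eq_neg_sup)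
  also have "\<dots> = - pprt u" by (simp only: minus_zero minus_minus pprt_def sup_commute)
  finally show ?thesis using neg by simp
qed

lemma inf_scaleR_eq_zero:
  fixes A B :: "'a::banach_lattice"
  assumes "0 \<le> A" "0 \<le> B" "inf A B = 0" "0 < t"
  shows "inf A (t *\<^sub>R B) = 0"
proof -
  have "inf A (t *\<^sub>R B) \<le> 0"
  proof (cases "t \<le> 1")
    case True
    then have "t *\<^sub>R B \<le> B" using scaleR_right_mono[OF True assms(2)] by simp
    then show ?thesis using assms(3) by (metis inf_mono order_refl)
  next
    case False
    then have "inverse t *\<^sub>R A \<le> A"
      using scaleR_right_mono[of "inverse t" 1 A] assms(1,4) by (simp add: inverse_le_1_iff)
    then have "inf (inverse t *\<^sub>R A) B \<le> 0" using assms(3) by (metis inf_mono order_refl)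
    then have "t *\<^sub>R inf (inverse t *\<^sub>R A) B \<le> 0"
      using assms(4) by (simp add: scaleR_nonneg_nonpos)
    then show ?thesis using assms(4) by (simp add: scaleR_inf)
  qed
  moreover have "0 \<le> inf A (t *\<^sub>R B)" using assms by (simp add: scaleR_nonneg_nonneg)
  ultimately show ?thesis by simp
qed

text \<open>The second positive part is a positive multiple of the positive part of the
  negation of the first.\<close>
lemma inf_pprt_diff_scaleR_eq_zero:
  fixes p q :: "'a::banach_lattice"
  assumes "0 < c"
  shows "inf (pprt (p - c *\<^sub>R q)) (pprt (q - inverse c *\<^sub>R p)) = 0"
proof -
  have "pprt (q - inverse c *\<^sub>R p) = inverse c *\<^sub>R pprt (- (p - c *\<^sub>R q))"
    using assms by (simp add: scaleR_pprt scaleR_diff_right)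
  moreover have "inf (pprt (p - c *\<^sub>R q)) (inverse c *\<^sub>R pprt (- (p - c *\<^sub>R q))) = 0"
    using assms by (intro inf_scaleR_eq_zero zero_le_pprt inf_pprt_pprt_uminus) simp
  ultimately show ?thesis by (simp only:)
qed

section \<open>Closedness of the positive cone and the Archimedean property\<close>

lemma tendsto_pprt:
  fixes X :: "nat \<Rightarrow> 'a::banach_lattice"
  assumes "X \<longlonglongrightarrow> L" shows "(\<lambda>n. pprt (X n)) \<longlonglongrightarrow> pprt L"
proof -
  have "(\<lambda>n. norm (X n - L)) \<longlonglongrightarrow> 0"
    using assms by (simp add: LIM_zero tendsto_norm_zero)
  then have "(\<lambda>n. pprt (X n) - pprt L) \<longlonglongrightarrow> 0"
    by (rule Lim_null_comparison[rotated]) (simp add: norm_pprt_diff)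
  then show ?thesis by (rule LIM_zero_cancel)
qed

lemma LIMSEQ_nonneg_lattice:
  fixes X :: "nat \<Rightarrow> 'a::banach_lattice"
  assumes "X \<longlonglongrightarrow> L" "eventually (\<lambda>n. 0 \<le> X n) sequentially"
  shows "0 \<le> L"
proof -
  have "(\<lambda>n. pprt (- X n)) \<longlonglongrightarrow> pprt (- L)"
    by (intro tendsto_pprt tendsto_minus assms)
  moreover have "eventually (\<lambda>n. pprt (- X n) = 0) sequentially"
    using assms(2) by eventually_elim simp
  ultimately have "(\<lambda>n. 0) \<longlonglongrightarrow> pprt (- L)"
    by (rule Lim_transform_eventually)
  then have "pprt (- L) = 0" using LIMSEQ_unique tendsto_const by blast
  then show ?thesis by (simp add: le_zero_iff_zero_pprt[symmetric])
qed

lemma LIMSEQ_ge_lattice: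
  fixes X :: "nat \<Rightarrow> 'a::banach_lattice"
  assumes "X \<longlonglongrightarrow> L" "eventually (\<lambda>n. c \<le> X n) sequentially"
  shows "c \<le> L"
proof -
  have "0 \<le> L - c"
    by (rule LIMSEQ_nonneg_lattice[of "\<lambda>n. X n - c"])
      (auto intro: tendsto_diff assms elim: eventually_mono[OF assms(2)])
  then show ?thesis by simp
qed

lemma member_le_sum_nonneg:
  fixes f :: "'i \<Rightarrow> 'a::ordered_comm_monoid_add"
  assumes "finite A" "i \<in> A" "\<And>j. j \<in> A \<Longrightarrow> 0 \<le> f j"
  shows "f i \<le> sum f A"
  using sum.remove[OF assms(1,2), of f] sum_nonneg[of "A - {i}" f] assms(3)
  by (simp add: add_increasing2)

lemma suminf_ge_term_lattice:
  fixes g :: "nat \<Rightarrow> 'a::banach_lattice"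
  assumes "summable g" "\<And>i. 0 \<le> g i"
  shows "g k \<le> suminf g"
proof (rule LIMSEQ_ge_lattice[OF summable_LIMSEQ[OF assms(1)]])
  have "g k \<le> sum g {..<n}" if "k < n" for n
    using that assms(2) by (intro member_le_sum_nonneg) auto
  then show "\<forall>\<^sub>F n in sequentially. g k \<le> sum g {..<n}"
    by (auto simp: eventually_sequentially intro: exI[of _ "Suc k"])
qed

lemma le_zero_if_multiples_bounded:
  fixes z c :: "'a::banach_lattice"
  assumes "\<And>n::nat. real n *\<^sub>R z \<le> c"
  shows "z \<le> 0"
proof -
  have bound: "real n * norm (pprt z) \<le> norm (pprt c)" for n
  proof -
    have "real n *\<^sub>R pprt z \<le> pprt c" using assms pprt_mono by (simp add: scaleR_pprt)
    then have "norm (real n *\<^sub>R pprt z) \<le> norm (pprt c)"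
      by (intro norm_mono_nonneg) (simp_all add: scaleR_nonneg_nonneg)
    then show ?thesis by simp
  qed
  have "norm (pprt z) = 0"
  proof (rule ccontr)
    assume "norm (pprt z) \<noteq> 0"
    then have "norm (pprt z) > 0" by simp
    moreover obtain n :: nat where "norm (pprt c) / norm (pprt z) < real n"
      using reals_Archimedean2 by blast
    ultimately show False using bound[of n] by (simp add: field_simps)
  qed
  then show ?thesis by (simp add: le_zero_iff_zero_pprt)
qed

section \<open>Hahn--Banach for sublinear functionals\<close>

definition sublinear :: "('a::real_vector \<Rightarrow> real) \<Rightarrow> bool" where
  "sublinear p \<longleftrightarrow> (\<forall>x y. p (x + y) \<le> p x + p y) \<and> (\<forall>t x. 0 \<le> t \<longrightarrow> p (t *\<^sub>R x) = t * p x)"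

text \<open>Partial linear functionals below \<open>p\<close> are encoded by their graphs: by
  \<open>dominated_subspace_graph\<close> such a subspace is the graph of a function.\<close>
definition dominated_subspace :: "('a::real_vector \<Rightarrow> real) \<Rightarrow> ('a \<times> real) set \<Rightarrow> bool" where
  "dominated_subspace p G \<longleftrightarrow> subspace G \<and> (\<forall>(x, r) \<in> G. r \<le> p x)"

lemma sublinear_zero: "sublinear p \<Longrightarrow> p 0 = 0"
  unfolding sublinear_def by (metis mult_zero_left order_refl scaleR_zero_left)

lemma sublinear_scaleR_ge:
  assumes "sublinear p" shows "t * p y \<le> p (t *\<^sub>R y)"
proof (cases "0 \<le> t")
  case True then show ?thesis using assms by (simp add: sublinear_def)
next
  case False
  have "0 = p (t *\<^sub>R y + (- t) *\<^sub>R y)" by (simp add: sublinear_zero[OF assms] flip: scaleR_add_left)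
  also have "\<dots> \<le> p (t *\<^sub>R y) + p ((- t) *\<^sub>R y)" using assms unfolding sublinear_def by blast
  also have "0 \<le> - t" using False by simp
  then have "p ((- t) *\<^sub>R y) = - t * p y" using assms unfolding sublinear_def by blast
  finally show ?thesis by simp
qed

lemma dominated_subspace_graph:
  assumes "sublinear p" "dominated_subspace p G" "(x, r) \<in> G" "(x, s) \<in> G"
  shows "r = s"
proof -
  have "(0, r - s) \<in> G" "(0, s - r) \<in> G"
    using subspace_diff[of G "(x, r)" "(x, s)"] subspace_diff[of G "(x, s)" "(x, r)"] assms(2-4)
    by (simp_all add: dominated_subspace_def)
  then have "r - s \<le> 0" "s - r \<le> 0"
    using assms(2) sublinear_zero[OF assms(1)] by (auto simp: dominated_subspace_def)
  then show ?thesis by simp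
qed

lemma dominated_subspace_Union_chain:
  assumes "chain\<^sub>\<subseteq> C" "C \<noteq> {}" "\<And>G. G \<in> C \<Longrightarrow> dominated_subspace p G"
  shows "dominated_subspace p (\<Union>C)"
  unfolding dominated_subspace_def subspace_def
proof (intro conjI ballI allI)
  obtain G where "G \<in> C" using assms(2) by blast
  moreover have "0 \<in> G" using assms(3)[OF \<open>G \<in> C\<close>] subspace_0 unfolding dominated_subspace_def by blast
  ultimately show "0 \<in> \<Union>C" by blast
next
  fix a b assume "a \<in> \<Union>C" "b \<in> \<Union>C"
  then obtain G H where GH: "G \<in> C" "H \<in> C" "a \<in> G" "b \<in> H" by blast
  moreover have "sup G H \<in> C"
    using assms(1) GH unfolding chain_subset_def by (metis sup_absorb1 sup_absorb2)
  ultimately have "a \<in> sup G H" "b \<in> sup G H" "sup G H \<in> C" by auto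
  moreover have "subspace (sup G H)"
    using assms(3)[OF \<open>sup G H \<in> C\<close>] by (simp add: dominated_subspace_def)
  ultimately have "a + b \<in> sup G H" using subspace_add by blast
  then show "a + b \<in> \<Union>C" using \<open>sup G H \<in> C\<close> by blast
next
  fix c a assume "a \<in> \<Union>C"
  then obtain G where "G \<in> C" "a \<in> G" by blast
  then have "c *\<^sub>R a \<in> G" using assms(3) subspace_scale unfolding dominated_subspace_def by blast
  then show "c *\<^sub>R a \<in> \<Union>C" using \<open>G \<in> C\<close> by blast
next
  fix a assume "a \<in> \<Union>C"
  then show "case a of (x, r) \<Rightarrow> r \<le> p x"
    using assms(3) by (auto simp: dominated_subspace_def)
qed

text \<open>The admissible values at \<open>x0\<close> lie between \<open>sup {r - p (x - x0)}\<close> and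
  \<open>inf {p (z + x0) - q}\<close>; sublinearity makes this interval nonempty.\<close>
lemma dominated_subspace_extension_value:
  assumes p: "sublinear p" and G: "dominated_subspace p G"
  shows "\<exists>c. (\<forall>x r. (x, r) \<in> G \<longrightarrow> r - p (x - x0) \<le> c) \<and> (\<forall>z q. (z, q) \<in> G \<longrightarrow> c \<le> p (z + x0) - q)"
proof -
  have Gsub: "subspace G" and Gp: "\<And>x r. (x, r) \<in> G \<Longrightarrow> r \<le> p x"
    using G by (auto simp: dominated_subspace_def)
  define S where "S = {r - p (x - x0) | x r. (x, r) \<in> G}"
  have sep: "r - p (x - x0) \<le> p (z + x0) - q" if "(x, r) \<in> G" "(z, q) \<in> G" for x r z q
  proof -
    have "r + q \<le> p (x + z)" using Gp subspace_add[OF Gsub that] by simp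
    also have "x + z = (x - x0) + (z + x0)" by simp
    also have "p \<dots> \<le> p (x - x0) + p (z + x0)" using p unfolding sublinear_def by blast
    finally show ?thesis by simp
  qed
  have "(0, 0) \<in> G" using subspace_0[OF Gsub] by (simp add: zero_prod_def)
  then have S: "S \<noteq> {}" "bdd_above S"
    unfolding S_def bdd_above_def using sep by blast+
  have "r - p (x - x0) \<le> Sup S" if "(x, r) \<in> G" for x r
    by (rule cSup_upper[OF _ S(2)]) (use that S_def in blast)
  moreover have "Sup S \<le> p (z + x0) - q" if "(z, q) \<in> G" for z q
    by (rule cSup_least[OF S(1)]) (use sep that S_def in blast)
  ultimately show ?thesis by blast
qed

lemma dominated_subspace_extend:
  assumes p: "sublinear p" and G: "dominated_subspace p G"
    and below: "\<And>x r. (x, r) \<in> G \<Longrightarrow> r - p (x - x0) \<le> c"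
    and above: "\<And>z q. (z, q) \<in> G \<Longrightarrow> c \<le> p (z + x0) - q"
  shows "dominated_subspace p {g + h | g h. g \<in> G \<and> h \<in> span {(x0, c)}}"
proof -
  have Gsub: "subspace G" and Gp: "\<And>x r. (x, r) \<in> G \<Longrightarrow> r \<le> p x"
    using G by (auto simp: dominated_subspace_def)
  have Gscale: "(t *\<^sub>R x, t * r) \<in> G" if "(x, r) \<in> G" for x r t
    using subspace_scale[OF Gsub that, of t] by simp
  have dom: "r + t * c \<le> p (x + t *\<^sub>R x0)" if "(x, r) \<in> G" for x r t
  proof (cases t "0 :: real" rule: linorder_cases)
    case less
    define s where "s = - t"
    have s: "0 < s" using less s_def by simp
    have "inverse s * r - p (inverse s *\<^sub>R x - x0) \<le> c" using below Gscale[OF that] by blast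
    then have "r - s * c \<le> s * p (inverse s *\<^sub>R x - x0)" using s by (simp add: field_simps)
    also have "\<dots> = p (s *\<^sub>R (inverse s *\<^sub>R x - x0))" using s p by (simp add: sublinear_def)
    finally show ?thesis using s by (simp add: s_def scaleR_diff_right)
  next
    case equal then show ?thesis using Gp that by simp
  next
    case greater
    have "c \<le> p (inverse t *\<^sub>R x + x0) - inverse t * r" using above Gscale[OF that] by blast
    then have "t * c \<le> t * p (inverse t *\<^sub>R x + x0) - r" using greater by (simp add: field_simps)
    also have "t * p (inverse t *\<^sub>R x + x0) = p (t *\<^sub>R (inverse t *\<^sub>R x + x0))"
      using greater p by (simp add: sublinear_def)
    finally show ?thesis using greater by (simp add: scaleR_add_right)
  qed
  have "r \<le> p x" if xr: "(x, r) \<in> {g + h | g h. g \<in> G \<and> h \<in> span {(x0, c)}}" for x r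
  proof -
    obtain g t where "g \<in> G" "(x, r) = g + t *\<^sub>R (x0, c)"
      using xr unfolding span_singleton by blast
    then show ?thesis using dom[of "fst g" "snd g" t] by (cases g) simp
  qed
  then have "\<forall>(x, r) \<in> {g + h | g h. g \<in> G \<and> h \<in> span {(x0, c)}}. r \<le> p x" by blast
  moreover have "subspace {g + h | g h. g \<in> G \<and> h \<in> span {(x0, c)}}"
    by (intro subspace_sums Gsub subspace_span)
  ultimately show ?thesis unfolding dominated_subspace_def by blast
qed

lemma maximal_dominated_subspace_total:
  assumes p: "sublinear p" and M: "dominated_subspace p M"
    and max: "\<And>G. dominated_subspace p G \<Longrightarrow> M \<subseteq> G \<Longrightarrow> G = M"
  shows "\<exists>r. (x0, r) \<in> M"
proof -
  obtain c where below: "\<And>x r. (x, r) \<in> M \<Longrightarrow> r - p (x - x0) \<le> c"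
    and above: "\<And>z q. (z, q) \<in> M \<Longrightarrow> c \<le> p (z + x0) - q"
    using dominated_subspace_extension_value[OF p M, of x0] by blast
  let ?M' = "{g + h | g h. g \<in> M \<and> h \<in> span {(x0, c)}}"
  have "dominated_subspace p ?M'" by (rule dominated_subspace_extend[OF p M below above])
  moreover have "M \<subseteq> ?M'"
  proof
    fix g assume "g \<in> M"
    then have "g + 0 \<in> ?M'" using span_zero by blast
    then show "g \<in> ?M'" by simp
  qed
  ultimately have "?M' = M" by (rule max)
  moreover have "0 + (x0, c) \<in> ?M'"
    using M subspace_0 span_base[of "(x0, c)"] unfolding dominated_subspace_def by blast
  ultimately show ?thesis by auto
qed

lemma exists_maximal_dominated_subspace:
  assumes p: "sublinear p"
  shows "\<exists>M. dominated_subspace p M \<and> (y, p y) \<in> M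
    \<and> (\<forall>G. dominated_subspace p G \<longrightarrow> M \<subseteq> G \<longrightarrow> G = M)"
proof -
  define A where "A = {G. dominated_subspace p G \<and> (y, p y) \<in> G}"
  have "r \<le> p x" if xr: "(x, r) \<in> span {(y, p y)}" for x r
  proof -
    obtain t where "(x, r) = t *\<^sub>R (y, p y)" using xr unfolding span_singleton by blast
    then show ?thesis using sublinear_scaleR_ge[OF p, of t y] by simp
  qed
  then have line: "span {(y, p y)} \<in> A"
    unfolding A_def dominated_subspace_def by (auto simp: span_base)
  have chain_bound: "\<exists>U\<in>A. \<forall>G\<in>C. G \<subseteq> U" if "C \<in> chains A" for C
  proof (cases "C = {}")
    case False
    have C: "chain\<^sub>\<subseteq> C" "C \<subseteq> A" using that by (simp_all add: chains_def)
    then have "dominated_subspace p (\<Union>C)"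
      by (intro dominated_subspace_Union_chain[OF _ False]) (auto simp: A_def)
    moreover have "(y, p y) \<in> \<Union>C" using False C(2) by (auto simp: A_def)
    ultimately show ?thesis unfolding A_def by blast
  qed (use line in blast)
  have "\<exists>M\<in>A. \<forall>G\<in>A. M \<subseteq> G \<longrightarrow> G = M"
    by (rule Zorn_Lemma2) (use chain_bound in blast)
  then show ?thesis unfolding A_def by blast
qed

theorem hahn_banach_sublinear:
  assumes p: "sublinear p"
  shows "\<exists>f. linear f \<and> (\<forall>x. f x \<le> p x) \<and> f y = p y"
proof -
  obtain M where M: "dominated_subspace p M" "(y, p y) \<in> M"
    and max: "\<And>G. dominated_subspace p G \<Longrightarrow> M \<subseteq> G \<Longrightarrow> G = M"
    using exists_maximal_dominated_subspace[OF p] by blast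
  have Msub: "subspace M" using M(1) by (simp add: dominated_subspace_def)
  define f where "f x = (THE r. (x, r) \<in> M)" for x
  have f_eq: "f x = r" if "(x, r) \<in> M" for x r
    unfolding f_def by (rule the_equality) (use that dominated_subspace_graph[OF p M(1) _ that] in blast)+
  have fM: "(x, f x) \<in> M" for x
    using maximal_dominated_subspace_total[OF p M(1) max, of x] f_eq by metis
  have "linear f"
  proof (rule linearI)
    show "f (a + b) = f a + f b" for a b using f_eq subspace_add[OF Msub fM fM] by simp
    show "f (t *\<^sub>R a) = t *\<^sub>R f a" for t a using f_eq subspace_scale[OF Msub fM] by simp
  qed
  moreover have "f x \<le> p x" for x using M(1) fM by (auto simp: dominated_subspace_def)
  ultimately show ?thesis using f_eq[OF M(2)] by blast
qed

text \<open>The positive part of the dual unit ball: \<open>\<phi> x \<le> norm (pprt x)\<close> for all \<open>x\<close>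
  holds exactly for positive functionals of norm at most one.\<close>
definition pos_dual_ball :: "('a::banach_lattice \<Rightarrow> real) \<Rightarrow> bool" where
  "pos_dual_ball \<phi> \<longleftrightarrow> linear \<phi> \<and> (\<forall>x. \<phi> x \<le> norm (pprt x))"

lemma pos_dual_ball_le_norm: "pos_dual_ball \<phi> \<Longrightarrow> \<phi> x \<le> norm x"
  unfolding pos_dual_ball_def using norm_pprt_le[of x] by (meson order_trans)

lemma pos_dual_ball_bounded_linear:
  assumes "pos_dual_ball \<phi>" shows "bounded_linear \<phi>"
proof -
  have lin: "linear \<phi>" using assms by (simp add: pos_dual_ball_def)
  have "norm (\<phi> x) \<le> norm x * 1" for x
    using pos_dual_ball_le_norm[OF assms, of x] pos_dual_ball_le_norm[OF assms, of "- x"]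
      linear_neg[OF lin, of x]
    by simp
  then show ?thesis using lin by (intro bounded_linear_intro[where K=1]) (auto simp: linear_iff)
qed

lemma pos_dual_ball_nonneg:
  assumes "pos_dual_ball \<phi>" "0 \<le> x" shows "0 \<le> \<phi> x"
proof -
  have "pprt (- x) = 0" using assms(2) by (simp add: pprt_eq_0)
  then have "\<phi> (- x) \<le> 0" using assms(1) unfolding pos_dual_ball_def by (metis norm_zero)
  moreover have "\<phi> (- x) = - \<phi> x" using assms(1) by (simp add: pos_dual_ball_def linear_neg)
  ultimately show ?thesis by simp
qed

lemma pos_dual_ball_mono: "pos_dual_ball \<phi> \<Longrightarrow> x \<le> y \<Longrightarrow> \<phi> x \<le> \<phi> y"
  using pos_dual_ball_nonneg[of \<phi> "y - x"]
  by (simp add: pos_dual_ball_def linear_diff)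

lemma pos_dual_ball_norming: "\<exists>\<phi>. pos_dual_ball \<phi> \<and> \<phi> y = norm (pprt y)"
proof -
  have "sublinear (\<lambda>x::'a. norm (pprt x))"
    unfolding sublinear_def
  proof (intro conjI allI impI)
    fix x z :: 'a
    have "norm (pprt (x + z)) \<le> norm (pprt x + pprt z)"
      by (rule norm_mono_nonneg[OF zero_le_pprt pprt_add_le])
    then show "norm (pprt (x + z)) \<le> norm (pprt x) + norm (pprt z)"
      using norm_triangle_ineq order_trans by blast
  next
    fix t :: real and x :: 'a assume "0 \<le> t"
    then show "norm (pprt (t *\<^sub>R x)) = t * norm (pprt x)" by (simp flip: scaleR_pprt)
  qed
  then show ?thesis
    unfolding pos_dual_ball_def using hahn_banach_sublinear by blast
qed

section \<open>Monotone sequences in order continuous Banach lattices\<close>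

lemma order_continuousD:
  fixes D :: "'a::banach_lattice set"
  assumes "order_continuous TYPE('a)" "D \<noteq> {}" "\<And>x y. x \<in> D \<Longrightarrow> y \<in> D \<Longrightarrow> \<exists>z\<in>D. z \<le> x \<and> z \<le> y"
    "\<And>x. x \<in> D \<Longrightarrow> 0 \<le> x" "\<And>w. \<forall>x\<in>D. w \<le> x \<Longrightarrow> w \<le> 0" "0 < e"
  shows "\<exists>x\<in>D. norm x < e"
proof -
  have "D \<noteq> {} \<and> (\<forall>x\<in>D. \<forall>y\<in>D. \<exists>z\<in>D. z \<le> x \<and> z \<le> y) \<and> (\<forall>x\<in>D. 0 \<le> x)
      \<and> (\<forall>w. (\<forall>x\<in>D. w \<le> x) \<longrightarrow> w \<le> 0)"
    using assms(2-5) by blast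
  then show ?thesis using assms(1,6) unfolding order_continuous_def by blast
qed

lemma le_zero_if_below_decseq_gaps:
  fixes a :: "nat \<Rightarrow> 'a::banach_lattice"
  assumes lb: "\<And>n. b \<le> a n" and z: "\<And>n y. (\<And>m. y \<le> a m) \<Longrightarrow> z \<le> a n - y"
  shows "z \<le> 0"
proof -
  have "b + real k *\<^sub>R z \<le> a n" for k n
  proof (induction k arbitrary: n)
    case (Suc k)
    have "z \<le> a n - (b + real k *\<^sub>R z)" using z Suc.IH by blast
    then show ?case by (simp add: algebra_simps le_diff_eq)
  qed (simp add: lb)
  then have "real k *\<^sub>R z \<le> a 0 - b" for k by (simp add: le_diff_eq add.commute)
  then show "z \<le> 0" by (rule le_zero_if_multiples_bounded)
qed

text \<open>The gaps \<open>a n - y\<close> between the sequence and its lower bounds form a downward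
  directed set with infimum \<open>0\<close>.\<close>
lemma order_continuous_decseq_gap_small:
  fixes a :: "nat \<Rightarrow> 'a::banach_lattice"
  assumes oc: "order_continuous TYPE('a)" and dec: "\<And>n. a (Suc n) \<le> a n" and lb: "\<And>n. b \<le> a n"
    and e: "0 < e"
  shows "\<exists>N y. (\<forall>n. y \<le> a n) \<and> norm (a N - y) < e"
proof -
  define D where "D = {a n - y | n y. \<forall>m. y \<le> a m}"
  have D_ne: "D \<noteq> {}" using lb D_def by blast
  have D_dir: "\<exists>z\<in>D. z \<le> x \<and> z \<le> x'" if xD: "x \<in> D" "x' \<in> D" for x x'
  proof -
    obtain n y n' y' where xy: "x = a n - y" "\<forall>m. y \<le> a m" "x' = a n' - y'" "\<forall>m. y' \<le> a m"
      using xD unfolding D_def by blast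
    have "a (max n n') - sup y y' \<le> a n - y" "a (max n n') - sup y y' \<le> a n' - y'"
      by (rule diff_mono, rule lift_Suc_antimono_le[of a, OF dec], simp, simp)+
    moreover have "a (max n n') - sup y y' \<in> D" using xy(2,4) unfolding D_def by fastforce
    ultimately show ?thesis using xy(1,3) by blast
  qed
  have D_pos: "0 \<le> x" if "x \<in> D" for x using that unfolding D_def by auto
  have D_inf: "z \<le> 0" if zD: "\<forall>x\<in>D. z \<le> x" for z
  proof (rule le_zero_if_below_decseq_gaps[where a = a and b = b])
    show "b \<le> a n" for n by (rule lb)
    show "z \<le> a n - y" if "\<And>m. y \<le> a m" for n y using zD that unfolding D_def by blast
  qed
  obtain x where "x \<in> D" "norm x < e"
    using order_continuousD[OF oc D_ne D_dir D_pos D_inf e] by blast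
  then show ?thesis unfolding D_def by blast
qed

lemma order_continuous_decseq_Cauchy:
  fixes a :: "nat \<Rightarrow> 'a::banach_lattice"
  assumes oc: "order_continuous TYPE('a)" and dec: "\<And>n. a (Suc n) \<le> a n" and lb: "\<And>n. b \<le> a n"
  shows "Cauchy a"
proof (rule CauchyI)
  fix e :: real assume "0 < e"
  then have "\<exists>N y. (\<forall>n. y \<le> a n) \<and> norm (a N - y) < e"
    by (rule order_continuous_decseq_gap_small[OF oc, where b = b, rotated 2]) (simp_all add: dec lb)
  then obtain N y where Ny: "\<forall>n. y \<le> a n" "norm (a N - y) < e" by blast
  have "norm (a m - a n) < e" if "N \<le> m" "N \<le> n" for m n
  proof -
    have "a m \<le> a N" "a n \<le> a N" using lift_Suc_antimono_le[of a, OF dec] that by blast+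
    then have "a m - a n \<le> a N - y" "- (a m - a n) \<le> a N - y"
      using Ny(1) by (auto intro: diff_mono)
    then have "norm (a m - a n) \<le> norm (a N - y)" by (rule norm_le_of_bounds)
    then show ?thesis using Ny(2) by simp
  qed
  then show "\<exists>M. \<forall>m\<ge>M. \<forall>n\<ge>M. norm (a m - a n) < e" by blast
qed

lemma order_continuous_incseq_convergent:
  fixes a :: "nat \<Rightarrow> 'a::banach_lattice"
  assumes oc: "order_continuous TYPE('a)" and inc: "\<And>n. a n \<le> a (Suc n)" and ub: "\<And>n. a n \<le> b"
  shows "convergent a"
proof -
  have "Cauchy (\<lambda>n. - a n)"
    by (rule order_continuous_decseq_Cauchy[OF oc, of _ "- b"]) (simp_all add: inc ub)
  then show ?thesis by (simp add: Cauchy_convergent_iff convergent_minus_iff[symmetric])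
qed

section \<open>Weakly null order bounded sequences in order continuous Banach lattices\<close>

primrec partial_sup :: "(nat \<Rightarrow> 'a::lattice) \<Rightarrow> nat \<Rightarrow> 'a" where
  "partial_sup u 0 = u 0"
| "partial_sup u (Suc m) = sup (partial_sup u m) (u (Suc m))"

lemma partial_sup_ge: "i \<le> m \<Longrightarrow> u i \<le> partial_sup u m"
  by (induction m) (auto simp: le_Suc_eq intro: le_supI1)

lemma partial_sup_le: "(\<And>i. u i \<le> w) \<Longrightarrow> partial_sup u m \<le> w"
  by (induction m) simp_all

lemma partial_sup_shift_le: "partial_sup (\<lambda>i. u (Suc i)) m \<le> partial_sup u (Suc m)"
  by (induction m) (auto intro: le_supI1 sup_mono)

lemma partial_sup_le_sum:
  fixes u :: "nat \<Rightarrow> 'a::lattice_ab_group_add"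
  assumes "\<And>i. 0 \<le> u i"
  shows "partial_sup u m \<le> (\<Sum>i\<le>m. u i)"
proof (induction m)
  case (Suc m)
  have "0 \<le> partial_sup u m" using assms partial_sup_ge[of 0 m u] order_trans by blast
  then have "partial_sup u (Suc m) \<le> partial_sup u m + u (Suc m)"
    using assms by (auto intro: add_increasing add_increasing2)
  also have "\<dots> \<le> (\<Sum>i\<le>Suc m. u i)" using Suc.IH by simp
  finally show ?case .
qed simp

lemma pos_dual_ball_partial_sup_le:
  assumes \<phi>: "pos_dual_ball \<phi>" and u0: "\<And>i. 0 \<le> u i" and small: "\<And>i. \<phi> (u i) \<le> c * (1/2) ^ i"
  shows "\<phi> (partial_sup u m) \<le> 2 * c"
proof -
  have "0 \<le> c" using small[of 0] pos_dual_ball_nonneg[OF \<phi> u0[of 0]] by simp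
  have "\<phi> (partial_sup u m) \<le> \<phi> (\<Sum>i\<le>m. u i)"
    by (intro pos_dual_ball_mono[OF \<phi>] partial_sup_le_sum u0)
  also have "\<dots> = (\<Sum>i\<le>m. \<phi> (u i))" using \<phi> by (simp add: pos_dual_ball_def linear_sum)
  also have "\<dots> \<le> c * (\<Sum>i\<le>m. (1/2) ^ i)" by (simp add: sum_distrib_left sum_mono small)
  also have "(\<Sum>i\<le>m. (1/2::real) ^ i) \<le> 2"
    using sum_le_suminf[of "\<lambda>i. (1/2::real) ^ i" "{..m}"] suminf_geometric[of "1/2::real"] by simp
  then have "c * (\<Sum>i\<le>m. (1/2) ^ i) \<le> c * 2" using \<open>0 \<le> c\<close> by (rule mult_left_mono)
  finally show ?thesis by simp
qed

lemma weakly_null_large_term_small_value: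
  fixes v :: "nat \<Rightarrow> 'a::real_normed_vector" and \<psi> :: "'a \<Rightarrow> real"
  assumes wn: "weakly_null v" and large: "\<And>N. \<exists>n\<ge>N. \<delta> \<le> norm (v n)"
    and \<psi>: "bounded_linear \<psi>" and e: "0 < e"
  shows "\<exists>n. \<delta> \<le> norm (v n) \<and> \<psi> (v n) \<le> e"
proof -
  have "(\<lambda>n. \<psi> (v n)) \<longlonglongrightarrow> 0" using wn \<psi> unfolding weakly_null_def by blast
  then obtain N where "\<And>n. n \<ge> N \<Longrightarrow> \<psi> (v n) < e"
    using order_tendstoD(2)[of _ 0 sequentially e] e by (auto simp: eventually_sequentially)
  moreover obtain n where "n \<ge> N" "\<delta> \<le> norm (v n)" using large by blast
  ultimately show ?thesis by force
qed

lemma weakly_null_subseq_almost_annihilated: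
  fixes v :: "nat \<Rightarrow> 'a::banach_lattice" and \<phi> :: "'a \<Rightarrow> 'a \<Rightarrow> real" and \<epsilon> :: "nat \<Rightarrow> real"
  assumes wn: "weakly_null v" and v0: "\<And>n. 0 \<le> v n" and large: "\<And>N. \<exists>n\<ge>N. \<delta> \<le> norm (v n)"
    and \<phi>: "\<And>y. pos_dual_ball (\<phi> y)" and \<epsilon>: "\<And>k. 0 < \<epsilon> k"
  shows "\<exists>u. (\<forall>k. u k \<in> range v \<and> \<delta> \<le> norm (u k)) \<and> (\<forall>j k. j < k \<longrightarrow> \<phi> (u j) (u k) \<le> \<epsilon> k)"
proof -
  note pick = weakly_null_large_term_small_value[OF wn large]
  \<comment> \<open>The state at step \<open>k\<close> is the chosen index together with the sum of the
    norming functionals chosen so far.\<close>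
  define P where "P k s \<longleftrightarrow> \<delta> \<le> norm (v (fst s)) \<and> bounded_linear (snd s)
    \<and> (\<forall>x\<ge>0. \<phi> (v (fst s)) x \<le> snd s x \<and> 0 \<le> snd s x)" for k :: nat and s :: "nat \<times> ('a \<Rightarrow> real)"
  define Q where "Q k s s' \<longleftrightarrow> snd s (v (fst s')) \<le> \<epsilon> (Suc k)
    \<and> snd s' = (\<lambda>x. snd s x + \<phi> (v (fst s')) x)" for k :: nat and s s' :: "nat \<times> ('a \<Rightarrow> real)"
  have "\<exists>f. \<forall>k. P k (f k) \<and> Q k (f k) (f (Suc k))"
  proof (rule dependent_nat_choice)
    obtain n where "\<delta> \<le> norm (v n)" using large by blast
    then show "\<exists>s. P 0 s"
      using \<phi> by (intro exI[of _ "(n, \<phi> (v n))"]) (auto simp: P_def pos_dual_ball_bounded_linear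
          pos_dual_ball_nonneg)
  next
    fix s k assume "P k s"
    then obtain n where n: "\<delta> \<le> norm (v n)" "snd s (v n) \<le> \<epsilon> (Suc k)"
      using pick[of "snd s" "\<epsilon> (Suc k)"] \<epsilon> by (auto simp: P_def)
    have "P (Suc k) (n, \<lambda>x. snd s x + \<phi> (v n) x)"
      using \<open>P k s\<close> n(1) \<phi> pos_dual_ball_nonneg[OF \<phi>]
      by (auto simp: P_def intro: bounded_linear_add pos_dual_ball_bounded_linear)
    then show "\<exists>s'. P (Suc k) s' \<and> Q k s s'" using n(2) by (auto simp: Q_def)
  qed
  then obtain f where f: "\<And>k. P k (f k)" "\<And>k. Q k (f k) (f (Suc k))" by blast
  define u where "u k = v (fst (f k))" for k
  define \<psi> where "\<psi> k = snd (f k)" for k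
  have \<psi>_Suc: "\<psi> (Suc k) x = \<psi> k x + \<phi> (u (Suc k)) x" for k x
    using f(2)[of k] by (simp add: Q_def \<psi>_def u_def)
  have \<psi>_mono: "\<psi> j x \<le> \<psi> k x" if "j \<le> k" "0 \<le> x" for j k x
    using that(1)
  proof (induction k rule: dec_induct)
    case (step k)
    then show ?case using pos_dual_ball_nonneg[OF \<phi> that(2), of "u (Suc k)"] by (simp add: \<psi>_Suc)
  qed simp
  have "\<phi> (u j) (u k) \<le> \<epsilon> k" if jk: "j < k" for j k
  proof -
    obtain k' where k: "k = Suc k'" "j \<le> k'" using jk by (cases k) auto
    have "0 \<le> u k" by (simp add: u_def v0)
    then have "\<phi> (u j) (u k) \<le> \<psi> k' (u k)"
      using f(1)[of j] \<psi>_mono[OF k(2)] by (fastforce simp: P_def u_def \<psi>_def)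
    also have "\<dots> \<le> \<epsilon> k" using f(2)[of k'] k(1) by (simp add: Q_def \<psi>_def u_def)
    finally show ?thesis .
  qed
  moreover have "u k \<in> range v \<and> \<delta> \<le> norm (u k)" for k
    using f(1)[of k] by (simp add: P_def u_def)
  ultimately show ?thesis by blast
qed

text \<open>The limits \<open>a K\<close> of the suprema of the tails \<open>u K, u (Suc K), \<dots>\<close> decrease, so by order
  continuity they form a Cauchy sequence; yet \<open>\<phi> K\<close> separates \<open>a K\<close> from \<open>a (Suc K)\<close>
  by \<open>\<delta> / 2\<close>.\<close>
lemma order_continuous_almost_annihilated_nonpos:
  fixes u :: "nat \<Rightarrow> 'a::banach_lattice" and \<phi> :: "nat \<Rightarrow> 'a \<Rightarrow> real"
  assumes oc: "order_continuous TYPE('a)" and u0: "\<And>k. 0 \<le> u k" and uw: "\<And>k. u k \<le> w"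
    and \<phi>: "\<And>k. pos_dual_ball (\<phi> k)" and norming: "\<And>k. \<delta> \<le> \<phi> k (u k)"
    and small: "\<And>j k. j < k \<Longrightarrow> \<phi> j (u k) \<le> \<delta> / 4 * (1/2) ^ k"
  shows "\<delta> \<le> 0"
proof (rule ccontr)
  assume "\<not> \<delta> \<le> 0"
  then have \<delta>: "0 < \<delta>" by simp
  define s where "s K = partial_sup (\<lambda>i. u (K + i))" for K
  have "convergent (s K)" for K
    unfolding s_def by (rule order_continuous_incseq_convergent[OF oc, of _ w]) (simp_all add: partial_sup_le uw)
  then obtain a where lim: "\<And>K. s K \<longlonglongrightarrow> a K"
    unfolding convergent_def by metis
  have u_le_a: "u K \<le> a K" for K
  proof (rule LIMSEQ_ge_lattice[OF lim])
    show "\<forall>\<^sub>F m in sequentially. u K \<le> s K m"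
      using partial_sup_ge[of 0 _ "\<lambda>i. u (K + i)"] by (simp add: s_def)
  qed
  have a_nonneg: "0 \<le> a K" for K using u_le_a u0 order_trans by blast
  have a_dec: "a (Suc K) \<le> a K" for K
  proof -
    have "s (Suc K) m \<le> s K (Suc m)" for m
      using partial_sup_shift_le[of "\<lambda>i. u (K + i)" m] by (simp add: s_def)
    then have "0 \<le> a K - a (Suc K)"
      by (intro LIMSEQ_nonneg_lattice[OF tendsto_diff[OF LIMSEQ_Suc[OF lim] lim]] always_eventually) simp
    then show ?thesis by simp
  qed
  have a_small: "\<phi> K (a (Suc K)) \<le> \<delta> / 2" for K
  proof -
    have "\<phi> K (u (Suc K + i)) \<le> \<delta> / 4 * (1/2) ^ i" for i
    proof -
      have "\<phi> K (u (Suc K + i)) \<le> \<delta> / 4 * (1/2) ^ (Suc K + i)" by (rule small) simp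
      also have "\<dots> \<le> \<delta> / 4 * (1/2) ^ i" using \<delta> by (intro mult_left_mono power_decreasing) simp_all
      finally show ?thesis .
    qed
    then have "\<phi> K (s (Suc K) m) \<le> \<delta> / 2" for m
      unfolding s_def
      using pos_dual_ball_partial_sup_le[where \<phi> = "\<phi> K" and u = "\<lambda>i. u (Suc K + i)" and c = "\<delta> / 4"]
        \<phi> u0 by simp
    moreover have "(\<lambda>m. \<phi> K (s (Suc K) m)) \<longlonglongrightarrow> \<phi> K (a (Suc K))"
      by (rule bounded_linear.tendsto[OF pos_dual_ball_bounded_linear[OF \<phi>] lim])
    ultimately show ?thesis by (intro LIMSEQ_le_const2) auto
  qed
  have gap: "\<delta> / 2 \<le> norm (a K - a (Suc K))" for K
  proof -
    have "\<delta> \<le> \<phi> K (a K)" using norming pos_dual_ball_mono[OF \<phi> u_le_a] order_trans by blast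
    also have "\<phi> K (a K) = \<phi> K (a K - a (Suc K)) + \<phi> K (a (Suc K))"
      using \<phi>[of K] by (simp add: pos_dual_ball_def linear_diff)
    also have "\<dots> \<le> norm (a K - a (Suc K)) + \<delta> / 2"
      using pos_dual_ball_le_norm[OF \<phi>] a_small by (intro add_mono)
    finally show ?thesis by simp
  qed
  have "Cauchy a" by (rule order_continuous_decseq_Cauchy[OF oc, of a 0]) (simp_all add: a_dec a_nonneg)
  then obtain M where "norm (a M - a (Suc M)) < \<delta> / 2"
    using CauchyD[of a "\<delta> / 2"] \<delta> by (metis half_gt_zero le_Suc_eq order_refl)
  with gap[of M] show False by simp
qed

lemma order_continuous_weakly_null_order_bounded_norm_null:
  fixes v :: "nat \<Rightarrow> 'a::banach_lattice"
  assumes oc: "order_continuous TYPE('a)" and v0: "\<And>n. 0 \<le> v n" and vw: "\<And>n. v n \<le> w"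
    and wn: "weakly_null v"
  shows "(\<lambda>n. norm (v n)) \<longlonglongrightarrow> 0"
proof (rule ccontr)
  assume "\<not> (\<lambda>n. norm (v n)) \<longlonglongrightarrow> 0"
  then obtain \<delta> where \<delta>: "0 < \<delta>" and large: "\<And>N. \<exists>n\<ge>N. \<delta> \<le> norm (v n)"
    unfolding LIMSEQ_iff by (auto simp: not_less)
  obtain \<phi> :: "'a \<Rightarrow> 'a \<Rightarrow> real" where \<phi>: "\<And>y. pos_dual_ball (\<phi> y)" and norming: "\<And>y. \<phi> y y = norm (pprt y)"
    using pos_dual_ball_norming by metis
  obtain u :: "nat \<Rightarrow> 'a" where u: "\<And>k. u k \<in> range v" "\<And>k. \<delta> \<le> norm (u k)"
    and small: "\<And>j k. j < k \<Longrightarrow> \<phi> (u j) (u k) \<le> \<delta> / 4 * (1/2) ^ k"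
    using weakly_null_subseq_almost_annihilated[OF wn v0 large, where \<phi> = \<phi> and \<epsilon> = "\<lambda>k. \<delta> / 4 * (1/2) ^ k"]
      \<phi> \<delta> by auto
  have u0: "0 \<le> u k" and uw: "u k \<le> w" for k using u(1)[of k] v0 vw by auto
  have "\<delta> \<le> \<phi> (u k) (u k)" for k using norming u(2) u0 by simp
  then have "\<delta> \<le> 0"
    using small \<phi> by (intro order_continuous_almost_annihilated_nonpos[OF oc u0 uw, where \<phi> = "\<lambda>k. \<phi> (u k)"])
  with \<delta> show False by simp
qed

lemma lattice_hom_sup: "lattice_hom T \<Longrightarrow> T (sup x y) = sup (T x) (T y)"
  by (simp add: lattice_hom_def)

lemma lattice_hom_diff: "lattice_hom T \<Longrightarrow> T (x - y) = T x - T y"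
  by (simp add: lattice_hom_def linear_diff)

lemma lattice_hom_pprt: "lattice_hom T \<Longrightarrow> T (pprt x) = pprt (T x)"
  by (simp add: pprt_def lattice_hom_sup lattice_hom_def linear_0)

lemma lattice_hom_labs: "lattice_hom T \<Longrightarrow> T (labs x) = labs (T x)"
  by (simp add: labs_def lattice_hom_sup lattice_hom_def linear_neg)

lemma lattice_hom_nonneg: "lattice_hom T \<Longrightarrow> 0 \<le> x \<Longrightarrow> 0 \<le> T x"
  by (metis lattice_hom_pprt pprt_eq_id zero_le_pprt)

lemma lattice_hom_mono: "lattice_hom T \<Longrightarrow> x \<le> y \<Longrightarrow> T x \<le> T y"
  using lattice_hom_nonneg[of T "y - x"] by (simp add: lattice_hom_diff)

lemma lattice_hom_norm_le_inf_add_pprt: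
  assumes "lattice_hom T"
  shows "norm (T x) \<le> norm (T (inf x w)) + norm (pprt (T x - T w))"
proof -
  have "T x = T (inf x w + pprt (x - w))" by (simp only: inf_add_pprt_diff)
  also have "\<dots> = T (inf x w) + T (pprt (x - w))" using assms by (simp add: lattice_hom_def linear_add)
  also have "T (pprt (x - w)) = pprt (T x - T w)" using assms by (simp add: lattice_hom_pprt lattice_hom_diff)
  finally show ?thesis using norm_triangle_ineq[of "T (inf x w)" "pprt (T x - T w)"] by simp
qed

section \<open>Truncations of \<open>uaw\<close>-null sequences\<close>

lemma weakly_null_bounded_linear_image:
  assumes "bounded_linear T" "weakly_null v"
  shows "weakly_null (\<lambda>n. T (v n))"
  unfolding weakly_null_def
proof (intro allI impI)
  fix f :: "'b \<Rightarrow> real" assume "bounded_linear f"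
  then have "bounded_linear (\<lambda>x. f (T x))" using bounded_linear_compose assms(1) by blast
  then show "(\<lambda>n. f (T (v n))) \<longlonglongrightarrow> 0" using assms(2) unfolding weakly_null_def by blast
qed

lemma lattice_hom_truncation_norm_null:
  fixes T :: "'a::banach_lattice \<Rightarrow> 'b::banach_lattice"
  assumes oc: "order_continuous TYPE('a) \<or> order_continuous TYPE('b)"
    and T: "bounded_linear T" "lattice_hom T" and x: "uaw_null x" and w: "0 \<le> w"
  shows "(\<lambda>n. norm (T (inf (labs (x n)) w))) \<longlonglongrightarrow> 0"
proof -
  define v where "v n = inf (labs (x n)) w" for n
  have v0: "0 \<le> v n" and vw: "v n \<le> w" for n using labs_nonneg w by (simp_all add: v_def)
  have wn: "weakly_null v" using x w unfolding uaw_null_def v_def by blast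
  from oc show ?thesis
  proof
    assume "order_continuous TYPE('a)"
    then have "(\<lambda>n. norm (v n)) \<longlonglongrightarrow> 0"
      using order_continuous_weakly_null_order_bounded_norm_null v0 vw wn by blast
    moreover obtain K where K: "\<And>u. norm (T u) \<le> norm u * K"
      using bounded_linear.bounded[OF T(1)] by blast
    ultimately have "(\<lambda>n. norm (v n) * K) \<longlonglongrightarrow> 0" by (simp add: tendsto_mult_left_zero)
    then show ?thesis unfolding v_def[symmetric] by (rule Lim_null_comparison[rotated]) (simp add: K)
  next
    assume "order_continuous TYPE('b)"
    then show ?thesis unfolding v_def[symmetric]
      using order_continuous_weakly_null_order_bounded_norm_null[of "\<lambda>n. T (v n)" "T w"]
        lattice_hom_nonneg[OF T(2) v0] lattice_hom_mono[OF T(2) vw]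
        weakly_null_bounded_linear_image[OF T(1) wn]
      by blast
  qed
qed

section \<open>\<open>L\<close>-weakly compact lattice homomorphisms\<close>

lemma choice_along_partial_sums:
  fixes z :: "nat \<Rightarrow> 'a::ordered_real_vector" and c :: "nat \<Rightarrow> real"
  assumes P: "\<And>w. 0 \<le> w \<Longrightarrow> \<exists>n. P n w" and z: "\<And>n. 0 \<le> z n" and c: "\<And>k. 0 \<le> c k"
  shows "\<exists>r. \<forall>k. P (r k) (c k *\<^sub>R (\<Sum>i<k. z (r i)))"
proof -
  obtain pick where pick: "\<And>w. 0 \<le> w \<Longrightarrow> P (pick w) w" using P by metis
  define Q where "Q = rec_nat 0 (\<lambda>k q. q + z (pick (c k *\<^sub>R q)))"
  define r where "r k = pick (c k *\<^sub>R Q k)" for k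
  have Q_sum: "Q k = (\<Sum>i<k. z (r i))" for k
    by (induction k) (simp_all add: Q_def r_def)
  have "0 \<le> c k *\<^sub>R Q k" for k
    unfolding Q_sum using c z by (simp add: scaleR_nonneg_nonneg sum_nonneg)
  then show ?thesis using pick Q_sum unfolding r_def by metis
qed

lemma bounded_nonneg_geometric_upper_bound:
  fixes y :: "nat \<Rightarrow> 'a::banach_lattice"
  assumes "bounded (range y)" "\<And>k. 0 \<le> y k"
  shows "\<exists>Y. \<forall>k. (1/2::real) ^ k *\<^sub>R y k \<le> Y"
proof -
  obtain B where B: "\<And>k. norm (y k) \<le> B" using assms(1) unfolding bounded_iff by blast
  have "summable (\<lambda>k. (1/2::real) ^ k * B)" by (intro summable_mult2 summable_geometric) simp
  then have "summable (\<lambda>k. (1/2::real) ^ k *\<^sub>R y k)"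
    by (rule summable_comparison_test') (simp add: B mult_left_mono)
  then have "(1/2::real) ^ k *\<^sub>R y k \<le> (\<Sum>k. (1/2::real) ^ k *\<^sub>R y k)" for k
    by (rule suminf_ge_term_lattice) (simp add: assms(2) scaleR_nonneg_nonneg)
  then show ?thesis by blast
qed

text \<open>For \<open>m < k\<close> the \<open>k\<close>-th term is below \<open>pprt (y k - 4 ^ k *\<^sub>R y m)\<close> and the
  \<open>m\<close>-th below \<open>pprt (y m - inverse (4 ^ k) *\<^sub>R y k)\<close>; these are disjoint.\<close>
lemma disjoint_seq_pprt_diff:
  fixes y S :: "nat \<Rightarrow> 'a::banach_lattice" and Y :: 'a
  assumes y0: "\<And>k. 0 \<le> y k" and S0: "\<And>k. 0 \<le> S k" and yS: "\<And>m k. m < k \<Longrightarrow> y m \<le> S k"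
    and yY: "\<And>k. (1/2::real) ^ k *\<^sub>R y k \<le> Y"
  shows "disjoint_seq (\<lambda>k. pprt (y k - (4::real) ^ k *\<^sub>R S k - (1/2::real) ^ k *\<^sub>R Y))"
proof -
  define d where "d k = pprt (y k - (4::real) ^ k *\<^sub>R S k - (1/2::real) ^ k *\<^sub>R Y)" for k
  have Y0: "0 \<le> Y" using y0[of 0] yY[of 0] by simp
  have tail0: "0 \<le> (1/2::real) ^ k *\<^sub>R Y" for k using Y0 by (simp add: scaleR_nonneg_nonneg)
  have "inf (d k) (d m) = 0" if mk: "m < k" for m k
  proof -
    define c where "c = (4::real) ^ k"
    have c0: "0 < c" unfolding c_def by simp
    have "c *\<^sub>R y m \<le> c *\<^sub>R S k + (1/2::real) ^ k *\<^sub>R Y"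
      using scaleR_left_mono[OF yS[OF mk], of c] c0 tail0[of k] by (simp add: add_increasing2)
    then have "d k \<le> pprt (y k - c *\<^sub>R y m)"
      unfolding d_def c_def by (intro pprt_mono) (simp add: algebra_simps)
    moreover have "d m \<le> pprt (y m - inverse c *\<^sub>R y k)"
    proof -
      have "inverse c = (1/2::real) ^ k * (1/2) ^ k"
        by (simp add: c_def power_mult_distrib[symmetric] power_one_over inverse_eq_divide)
      also have "\<dots> \<le> (1/2) ^ m * (1/2) ^ k" using mk by (intro mult_right_mono power_decreasing) simp_all
      finally have "inverse c *\<^sub>R y k \<le> (1/2::real) ^ m *\<^sub>R ((1/2) ^ k *\<^sub>R y k)"
        using scaleR_right_mono y0[of k] by fastforce
      also have "\<dots> \<le> (1/2::real) ^ m *\<^sub>R Y" by (rule scaleR_left_mono[OF yY]) simp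
      also have "\<dots> \<le> (4::real) ^ m *\<^sub>R S m + (1/2::real) ^ m *\<^sub>R Y"
        using S0[of m] by (simp add: scaleR_nonneg_nonneg)
      finally show ?thesis unfolding d_def by (intro pprt_mono) (simp add: algebra_simps)
    qed
    ultimately have "inf (d k) (d m) \<le> inf (pprt (y k - c *\<^sub>R y m)) (pprt (y m - inverse c *\<^sub>R y k))"
      by (rule inf_mono)
    also have "\<dots> = 0" by (rule inf_pprt_diff_scaleR_eq_zero[OF c0])
    finally show ?thesis by (simp add: d_def order_antisym)
  qed
  then show ?thesis
    unfolding disjoint_seq_def d_def[symmetric]
    by (metis inf_commute labs_of_nonneg nat_neq_iff zero_le_pprt d_def)
qed

lemma L_weakly_compact_dominated_disjoint_norm_null:
  fixes T :: "'a::banach_lattice \<Rightarrow> 'b::banach_lattice"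
  assumes T: "L_weakly_compact T" and x: "bounded (range x)" and d: "disjoint_seq d"
    and dom: "\<And>k. labs (d k) \<le> labs (T (x k))"
  shows "(\<lambda>k. norm (d k)) \<longlonglongrightarrow> 0"
proof -
  obtain M where M: "0 < M" "\<And>n. norm (x n) \<le> M" using x unfolding bounded_pos by auto
  have lin: "linear T" using T by (simp add: L_weakly_compact_def bounded_linear.linear)
  define e where "e k = inverse M *\<^sub>R d k" for k
  have labs_e: "labs (e k) = inverse M *\<^sub>R labs (d k)" for k
    unfolding e_def using M(1) by (simp add: scaleR_labs)
  have "disjoint_seq e"
    using d M(1) unfolding disjoint_seq_def labs_e by (simp flip: scaleR_inf)
  moreover have "e k \<in> solid_hull (T ` cball 0 1)" for k
  proof -
    have "labs (e k) \<le> inverse M *\<^sub>R labs (T (x k))"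
      unfolding labs_e using dom M(1) by (simp add: scaleR_left_mono)
    also have "\<dots> = labs (T (inverse M *\<^sub>R x k))"
      using M(1) lin by (simp add: scaleR_labs linear_scale)
    finally show ?thesis
      unfolding solid_hull_def using M by (auto simp: field_simps intro!: bexI[of _ "T (inverse M *\<^sub>R x k)"])
  qed
  ultimately have "(\<lambda>k. norm (e k)) \<longlonglongrightarrow> 0" using T unfolding L_weakly_compact_def by blast
  then have "(\<lambda>k. M * norm (e k)) \<longlonglongrightarrow> 0" by (simp add: tendsto_mult_right_zero)
  then show ?thesis unfolding e_def using M(1) by simp
qed

text \<open>The escaping parts, disjointified by \<open>disjoint_seq_pprt_diff\<close>, lie in the solid hull
  of the image of a ball, so L-weak compactness makes them norm null.\<close>
lemma L_weakly_compact_lattice_hom_escape_nonpos: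
  fixes T :: "'a::banach_lattice \<Rightarrow> 'b::banach_lattice" and x :: "nat \<Rightarrow> 'a"
  assumes T: "L_weakly_compact T" "lattice_hom T"
    and x: "bounded (range x)" "\<And>n. 0 \<le> x n"
    and escape: "\<And>k. \<epsilon> \<le> norm (pprt (T (x k) - (4::real) ^ k *\<^sub>R T (\<Sum>i<k. x i)))"
  shows "\<epsilon> \<le> 0"
proof -
  have lin: "bounded_linear T" using T(1) by (simp add: L_weakly_compact_def)
  define y where "y k = T (x k)" for k
  define S where "S k = T (\<Sum>i<k. x i)" for k
  have y0: "0 \<le> y k" for k unfolding y_def by (rule lattice_hom_nonneg[OF T(2) x(2)])
  have S0: "0 \<le> S k" for k unfolding S_def by (intro lattice_hom_nonneg[OF T(2)] sum_nonneg x(2))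
  have yS: "y m \<le> S k" if "m < k" for m k
    unfolding y_def S_def using that x(2)
    by (intro lattice_hom_mono[OF T(2)] member_le_sum_nonneg[of "{..<k}" m x]) auto
  have "bounded (range y)"
    using bounded_linear_image[OF x(1) lin] unfolding y_def by (simp add: image_image)
  then obtain Y where yY: "\<And>k. (1/2::real) ^ k *\<^sub>R y k \<le> Y"
    using bounded_nonneg_geometric_upper_bound y0 by blast
  have tail0: "0 \<le> (1/2::real) ^ k *\<^sub>R Y" for k
    using y0[of 0] yY[of 0] by (simp add: scaleR_nonneg_nonneg)
  define d where "d k = pprt (y k - (4::real) ^ k *\<^sub>R S k - (1/2::real) ^ k *\<^sub>R Y)" for k
  have "labs (d k) \<le> labs (T (x k))" for k
  proof -
    have "0 \<le> (4::real) ^ k *\<^sub>R S k + (1/2::real) ^ k *\<^sub>R Y"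
      using S0[of k] tail0[of k] by (simp add: scaleR_nonneg_nonneg)
    then have "d k \<le> pprt (y k)"
      unfolding d_def by (intro pprt_mono) (simp add: algebra_simps)
    then show ?thesis using y0[of k] by (simp add: d_def labs_of_nonneg y_def)
  qed
  moreover have "disjoint_seq d"
    unfolding d_def using y0 S0 yS yY by (rule disjoint_seq_pprt_diff)
  ultimately have "(\<lambda>k. norm (d k)) \<longlonglongrightarrow> 0"
    using L_weakly_compact_dominated_disjoint_norm_null[OF T(1) x(1)] by blast
  moreover have "\<epsilon> - (1/2) ^ k * norm Y \<le> norm (d k)" for k
    using escape[of k] norm_pprt_diff_ge[OF tail0[of k], of "y k - (4::real) ^ k *\<^sub>R S k"]
    unfolding d_def y_def S_def by simp
  moreover have "(\<lambda>k. \<epsilon> - (1/2::real) ^ k * norm Y) \<longlonglongrightarrow> \<epsilon>"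
    by (auto intro!: tendsto_eq_intros LIMSEQ_power_zero)
  ultimately show "\<epsilon> \<le> 0" by (intro LIMSEQ_le) auto
qed

lemma L_weakly_compact_lattice_hom_norm_null:
  fixes T :: "'a::banach_lattice \<Rightarrow> 'b::banach_lattice"
  assumes T: "L_weakly_compact T" "lattice_hom T"
    and z: "bounded (range z)" "\<And>n. 0 \<le> z n"
    and trunc: "\<And>w. 0 \<le> w \<Longrightarrow> (\<lambda>n. norm (T (inf (z n) w))) \<longlonglongrightarrow> 0"
  shows "(\<lambda>n. norm (T (z n))) \<longlonglongrightarrow> 0"
proof (rule ccontr)
  assume "\<not> (\<lambda>n. norm (T (z n))) \<longlonglongrightarrow> 0"
  then obtain \<delta> where \<delta>: "0 < \<delta>" and large: "\<And>N. \<exists>n\<ge>N. \<delta> \<le> norm (T (z n))"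
    unfolding LIMSEQ_iff by (auto simp: not_less)
  have pick: "\<exists>n. \<delta> \<le> norm (T (z n)) \<and> norm (T (inf (z n) w)) \<le> \<delta> / 2" if w: "0 \<le> w" for w
  proof -
    obtain N where "\<And>n. n \<ge> N \<Longrightarrow> norm (T (inf (z n) w)) < \<delta> / 2"
      using order_tendstoD(2)[OF trunc[OF w], of "\<delta> / 2"] \<delta> by (auto simp: eventually_sequentially)
    moreover obtain n where "n \<ge> N" "\<delta> \<le> norm (T (z n))" using large by blast
    ultimately show ?thesis by force
  qed
  obtain r where r: "\<forall>k. \<delta> \<le> norm (T (z (r k)))
      \<and> norm (T (inf (z (r k)) ((4::real) ^ k *\<^sub>R (\<Sum>i<k. z (r i))))) \<le> \<delta> / 2"
    using choice_along_partial_sums[where z = z and c = "\<lambda>k. 4 ^ k"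
        and P = "\<lambda>n w. \<delta> \<le> norm (T (z n)) \<and> norm (T (inf (z n) w)) \<le> \<delta> / 2"] pick z(2)
    by force
  have "\<delta> / 2 \<le> norm (pprt (T (z (r k)) - (4::real) ^ k *\<^sub>R T (\<Sum>i<k. z (r i))))" for k
  proof -
    have TS: "T ((4::real) ^ k *\<^sub>R (\<Sum>i<k. z (r i))) = (4::real) ^ k *\<^sub>R T (\<Sum>i<k. z (r i))"
      using T(2) by (simp add: lattice_hom_def linear_scale)
    have "norm (T (z (r k))) \<le> norm (T (inf (z (r k)) ((4::real) ^ k *\<^sub>R (\<Sum>i<k. z (r i)))))
        + norm (pprt (T (z (r k)) - (4::real) ^ k *\<^sub>R T (\<Sum>i<k. z (r i))))"
      using lattice_hom_norm_le_inf_add_pprt[OF T(2), of "z (r k)" "(4::real) ^ k *\<^sub>R (\<Sum>i<k. z (r i))"]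
      unfolding TS .
    then show ?thesis using r[rule_format, of k] by linarith
  qed
  moreover have "bounded (range (\<lambda>k. z (r k)))" using z(1) by (rule bounded_subset) auto
  ultimately have "\<delta> / 2 \<le> 0"
    using L_weakly_compact_lattice_hom_escape_nonpos[OF T, of "\<lambda>k. z (r k)"] z(2) by blast
  with \<delta> show False by simp
qed

theorem corollary2p17:
  fixes T :: "'a::banach_lattice \<Rightarrow> 'b::banach_lattice"
  assumes "order_continuous TYPE('a) \<or> order_continuous TYPE('b)"
    and "bounded_linear T"
    and "lattice_hom T"
    and "L_weakly_compact T"
  shows "uaw_DP T"
  unfolding uaw_DP_def
proof (intro conjI allI impI)
  show "bounded_linear T" by (rule assms(2))
  fix x :: "nat \<Rightarrow> 'a" assume x: "bounded (range x) \<and> uaw_null x"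
  have "(\<lambda>n. norm (T (labs (x n)))) \<longlonglongrightarrow> 0"
  proof (rule L_weakly_compact_lattice_hom_norm_null[OF assms(4,3)])
    show "bounded (range (\<lambda>n. labs (x n)))" using x by (simp add: bounded_iff norm_labs)
    show "0 \<le> labs (x n)" for n by (rule labs_nonneg)
    show "(\<lambda>n. norm (T (inf (labs (x n)) w))) \<longlonglongrightarrow> 0" if "0 \<le> w" for w
      using lattice_hom_truncation_norm_null[OF assms(1-3)] x that by blast
  qed
  then show "(\<lambda>n. norm (T (x n))) \<longlonglongrightarrow> 0" by (simp add: lattice_hom_labs[OF assms(3)] norm_labs)
qed

end
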